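(* Let $(\varphi_k)_{k\ge0}$ be a sequence of nonnegative weights with $\varphi_0>0$ and $\varphi(t)=\sum_k\varphi_kt^k$. For every $n\ge1$ there is a bijection between the set of (ordered) increasing diamonds of size $n$ on the label set $\{1,\dots,n\}$ with degree-weights $(\varphi_k)$ and the set of ordered increasing bucket trees of size $n$ with maximal bucket size $b=2$, degree-weights $(\varphi_k)$ and $\psi_1=1$; this bijection preserves weights. In particular both families have the same total weight for each size $n$.
   Context: Increasing diamonds are defined recursively on a finite set $L$ of integer labels. If $|L|=1$, the unique increasing diamond on $L$ is a single vertex carrying that label; its weight is $1$. If $|L|\ge2$, an increasing diamond on $L$ consists of a source vertex labelled $\min L$, a sink vertex labelled $\max L$, and an ordered sequence $(F_1,\dots,F_r)$, $r\ge0$, of increasing diamonds whose label sets partition $L\setminus\{\min L,\max L\}$ (as a directed graph: the source points to the minimal vertex of each $F_i$ and the maximal vertex of each $F_i$ points to the sink); its weight is $\varphi_r\prod_{i=1}^r w(F_i)$. The size is $|L|$. (Symbolically $\mathcal F=\mathcal Z^{\Box}+\mathcal Z^{\Box}\ast\varphi(\mathcal F)\ast\mathcal Z^{\blacksquare}$.) Ordered increasing bucket trees with $b=2$: rooted plane trees (children ordered) whose nodes have capacity $1$ or $2$, every node with a child having capacity $2$; a tree of size $n$ (sum of capacities) carries labels $1,\dots,n$, each node holding as many labels as its capacity, with every label in a node smaller than all labels in its children. Weight: product over nodes of $\varphi_{d^+(v)}$ for capacity-2 nodes ($d^+(v)$ = number of children) and $\psi_1=1$ for capacity-1 nodes. 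*)

theory Defs
  imports Complex_Main
begin

definition pw_disj :: "nat set list \<Rightarrow> bool" where
  "pw_disj Ls \<longleftrightarrow> (\<forall>i<length Ls. \<forall>j<length Ls. i \<noteq> j \<longrightarrow> Ls ! i \<inter> Ls ! j = {})"

text \<open>Increasing diamonds: a single vertex, or source label, ordered list of
  sub-diamonds, sink label.\<close>
datatype diamond = DLeaf nat | DNode nat "diamond list" nat

inductive diamond_on :: "nat set \<Rightarrow> diamond \<Rightarrow> bool" where
  leaf: "diamond_on {l} (DLeaf l)"
| node: "\<lbrakk> finite L; card L \<ge> 2; list_all2 diamond_on Ls Fs; pw_disj Ls;
           \<Union>(set Ls) = L - {Min L, Max L} \<rbrakk>
         \<Longrightarrow> diamond_on L (DNode (Min L) Fs (Max L))"

fun dweight :: "(nat \<Rightarrow> real) \<Rightarrow> diamond \<Rightarrow> real" where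
  "dweight phi (DLeaf l) = 1"
| "dweight phi (DNode a Fs b) = phi (length Fs) * prod_list (map (dweight phi) Fs)"

text \<open>Ordered increasing bucket trees with maximal bucket size 2: each node holds a
  set of labels (its bucket, of capacity 1 or 2) and an ordered list of children.\<close>
datatype btree = BNode "nat set" "btree list"

inductive bt_on :: "nat set \<Rightarrow> btree \<Rightarrow> bool" where
  node: "\<lbrakk> card S = 1 \<or> card S = 2; card S = 1 \<longrightarrow> Ts = [];
           list_all2 bt_on Ls Ts; pw_disj Ls; S \<inter> \<Union>(set Ls) = {};
           \<forall>x\<in>S. \<forall>y\<in>\<Union>(set Ls). x < y; L = S \<union> \<Union>(set Ls) \<rbrakk>
         \<Longrightarrow> bt_on L (BNode S Ts)"

text \<open>Weight: \<open>phi (outdegree)\<close> for capacity-2 nodes, \<open>psi_1 = 1\<close> for capacity-1 nodes.\<close>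
fun btweight :: "(nat \<Rightarrow> real) \<Rightarrow> btree \<Rightarrow> real" where
  "btweight phi (BNode S Ts) =
     (if card S = 2 then phi (length Ts) else 1) * prod_list (map (btweight phi) Ts)"

end

theory Submission
  imports Defs
begin

text \<open>A diamond on \<open>L\<close> with source \<open>a = Min L\<close> and sink \<open>Max L\<close> becomes a bucket tree whose
  root bucket is \<open>{a, a'}\<close>, where \<open>a'\<close> is the successor of \<open>a\<close> in \<open>L\<close>.  Shifting every label
  of \<open>L - {Max L}\<close> to its successor in \<open>L\<close> is an order isomorphism onto \<open>L - {a}\<close>; it carries
  the inner labels \<open>L - {a, Max L}\<close> onto \<open>L - {a, a'}\<close>, all of which exceed the root bucket,
  so the shifted sub-diamonds, converted recursively, become the subtrees.  The sink is
  forgotten and recovered as \<open>Max L\<close>; shifting back to predecessors inverts the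
  construction.  Since the root has bucket size 2 and as many children as the source has
  sub-diamonds, both get the weight \<open>phi r\<close>; no hypothesis on the weights is needed.\<close>

lemma less_Max_iff_neq:
  assumes "finite L" "x \<in> L"
  shows "x < Max L \<longleftrightarrow> x \<noteq> Max L"
  using Max_ge[OF assms] by auto

lemma Min_less_iff_neq:
  assumes "finite L" "x \<in> L"
  shows "Min L < x \<longleftrightarrow> x \<noteq> Min L"
  using Min_le[OF assms] by auto

lemma Min_less_Max:
  assumes "finite L" "2 \<le> card L"
  shows "Min L < Max L"
proof (rule ccontr)
  assume "\<not> Min L < Max L"
  then have "L \<subseteq> {Min L}"
    using Min_le[OF assms(1)] Max_ge[OF assms(1)] by (metis antisym not_le order_trans singletonI subsetI)
  then have "card L \<le> 1" using card_mono[of "{Min L}" L] by simp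
  with assms(2) show False by simp
qed

lemma mono_on_Min_commute:
  assumes "mono_on A f" "finite A" "A \<noteq> {}"
  shows "Min (f ` A) = f (Min A)"
  using assms by (intro Min_eqI) (auto intro!: mono_onD[OF assms(1)] Min_in)

lemma mono_on_Max_commute:
  assumes "mono_on A f" "finite A" "A \<noteq> {}"
  shows "Max (f ` A) = f (Max A)"
  using assms by (intro Max_eqI) (auto intro!: mono_onD[OF assms(1)] Max_in)

lemma list_all2_in_set2: "list_all2 P xs ys \<Longrightarrow> y \<in> set ys \<Longrightarrow> \<exists>x\<in>set xs. P x y"
  by (induction rule: list_all2_induct) auto

lemma pw_disj_map_image:
  assumes "inj_on f (\<Union>(set Ls))" "pw_disj Ls"
  shows "pw_disj (map ((`) f) Ls)"
  unfolding pw_disj_def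
proof (intro allI impI)
  fix i j assume ij: "i < length (map ((`) f) Ls)" "j < length (map ((`) f) Ls)" "i \<noteq> j"
  then have "f ` (Ls ! i) \<inter> f ` (Ls ! j) = f ` (Ls ! i \<inter> Ls ! j)"
    using inj_on_image_Int[OF assms(1)] by (metis Union_upper length_map nth_mem)
  also have "\<dots> = {}" using assms(2) ij unfolding pw_disj_def by auto
  finally show "map ((`) f) Ls ! i \<inter> map ((`) f) Ls ! j = {}" using ij by simp
qed

section \<open>Successor and predecessor in a finite linear order\<close>

text \<open>\<open>next_in L x\<close> is junk (\<open>Min {}\<close>) unless some element of \<open>L\<close> exceeds \<open>x\<close>; dually for \<open>prev_in\<close>.\<close>

definition next_in :: "'a::linorder set \<Rightarrow> 'a \<Rightarrow> 'a" where
  "next_in L x = Min {y \<in> L. x < y}"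

definition prev_in :: "'a::linorder set \<Rightarrow> 'a \<Rightarrow> 'a" where
  "prev_in L x = Max {y \<in> L. y < x}"

lemma next_in_least:
  assumes "finite L" "y \<in> L" "x < y"
  shows "next_in L x \<in> L" "x < next_in L x" "next_in L x \<le> y"
proof -
  let ?A = "{y \<in> L. x < y}"
  have A: "finite ?A" "y \<in> ?A" using assms by auto
  then have "Min ?A \<in> ?A" by (intro Min_in) auto
  with Min_le[OF A] show
    "next_in L x \<in> L" "x < next_in L x" "next_in L x \<le> y"
    unfolding next_in_def by auto
qed

lemma prev_in_greatest:
  assumes "finite L" "y \<in> L" "y < x"
  shows "prev_in L x \<in> L" "prev_in L x < x" "y \<le> prev_in L x"
proof -
  let ?A = "{y \<in> L. y < x}"
  have A: "finite ?A" "y \<in> ?A" using assms by auto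
  then have "Max ?A \<in> ?A" by (intro Max_in) auto
  with Max_ge[OF A] show
    "prev_in L x \<in> L" "prev_in L x < x" "y \<le> prev_in L x"
    unfolding prev_in_def by auto
qed

lemma next_in_eqI:
  assumes "finite L" "y \<in> L" "x < y" "\<And>z. z \<in> L \<Longrightarrow> x < z \<Longrightarrow> y \<le> z"
  shows "next_in L x = y"
  unfolding next_in_def using assms by (intro Min_eqI) auto

lemma prev_in_eqI:
  assumes "finite L" "y \<in> L" "y < x" "\<And>z. z \<in> L \<Longrightarrow> z < x \<Longrightarrow> z \<le> y"
  shows "prev_in L x = y"
  unfolding prev_in_def using assms by (intro Max_eqI) auto

lemma prev_in_next_in:
  assumes "finite L" "x \<in> L" "x < Max L"
  shows "prev_in L (next_in L x) = x"
proof -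
  have "Max L \<in> L" using assms(1,2) by (intro Max_in) auto
  note next_x = next_in_least[OF assms(1) this assms(3)]
  show ?thesis
  proof (rule prev_in_eqI[OF assms(1,2) next_x(2)])
    fix z assume "z \<in> L" "z < next_in L x"
    then show "z \<le> x" using next_in_least(3)[OF assms(1)] by (meson leD leI)
  qed
qed

lemma next_in_prev_in:
  assumes "finite L" "x \<in> L" "Min L < x"
  shows "next_in L (prev_in L x) = x"
proof -
  have "Min L \<in> L" using assms(1,2) by (intro Min_in) auto
  note prev_x = prev_in_greatest[OF assms(1) this assms(3)]
  show ?thesis
  proof (rule next_in_eqI[OF assms(1,2) prev_x(2)])
    fix z assume "z \<in> L" "prev_in L x < z"
    then show "x \<le> z" using prev_in_greatest(3)[OF assms(1)] by (meson leD leI)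
  qed
qed

lemma strict_mono_on_next_in:
  assumes "finite L"
  shows "strict_mono_on (L - {Max L}) (next_in L)"
proof (rule strict_mono_onI)
  fix x y assume "x \<in> L - {Max L}" "y \<in> L - {Max L}" "x < y"
  then have "x \<in> L" "y \<in> L" "y < Max L" "x < y" "Max L \<in> L"
    using assms by (auto simp: less_Max_iff_neq intro: Max_in)
  then have "next_in L x \<le> y" "y < next_in L y"
    using next_in_least[OF assms] by auto
  then show "next_in L x < next_in L y" by simp
qed

lemma strict_mono_on_prev_in:
  assumes "finite L"
  shows "strict_mono_on (L - {Min L}) (prev_in L)"
proof (rule strict_mono_onI)
  fix x y assume "x \<in> L - {Min L}" "y \<in> L - {Min L}" "x < y"
  then have "x \<in> L" "y \<in> L" "Min L < x" "x < y" "Min L \<in> L"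
    using assms by (auto simp: Min_less_iff_neq intro: Min_in)
  then have "prev_in L x < x" "x \<le> prev_in L y"
    using prev_in_greatest[OF assms] by auto
  then show "prev_in L x < prev_in L y" by simp
qed

lemma image_next_in:
  assumes "finite L"
  shows "next_in L ` (L - {Max L}) = L - {Min L}"
proof
  show "next_in L ` (L - {Max L}) \<subseteq> L - {Min L}"
  proof (rule image_subsetI)
    fix x assume "x \<in> L - {Max L}"
    then have "x \<in> L" "x < Max L" "Max L \<in> L" using assms by (auto simp: less_Max_iff_neq intro: Max_in)
    then have "next_in L x \<in> L" "Min L \<le> x" "x < next_in L x"
      using next_in_least[OF assms] assms by auto
    then show "next_in L x \<in> L - {Min L}" by auto
  qed
next
  show "L - {Min L} \<subseteq> next_in L ` (L - {Max L})"
  proof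
    fix x assume "x \<in> L - {Min L}"
    then have "x \<in> L" "Min L < x" "Min L \<in> L" using assms by (auto simp: Min_less_iff_neq intro: Min_in)
    then have "prev_in L x \<in> L" "prev_in L x < x" "x = next_in L (prev_in L x)"
      using prev_in_greatest[OF assms] next_in_prev_in[OF assms] by auto
    moreover have "x \<le> Max L" using assms \<open>x \<in> L\<close> by simp
    ultimately show "x \<in> next_in L ` (L - {Max L})" by (intro rev_image_eqI) auto
  qed
qed

lemma image_prev_in:
  assumes "finite L"
  shows "prev_in L ` (L - {Min L}) = L - {Max L}"
proof -
  have "prev_in L ` (L - {Min L}) = prev_in L ` next_in L ` (L - {Max L})"
    by (simp add: image_next_in[OF assms])
  also have "\<dots> = (\<lambda>x. x) ` (L - {Max L})"
    unfolding image_image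
    by (rule image_cong[OF refl prev_in_next_in[OF assms]]) (auto simp: less_Max_iff_neq[OF assms])
  finally show ?thesis by simp
qed

lemma image_next_in_Diff:
  assumes "finite L" "x \<in> L" "x < Max L"
  shows "next_in L ` (L - {Max L, x}) = L - {Min L, next_in L x}"
proof -
  have "inj_on (next_in L) (L - {Max L})"
    by (rule strict_mono_on_imp_inj_on[OF strict_mono_on_next_in[OF assms(1)]])
  then have "next_in L ` (L - {Max L} - {x}) = next_in L ` (L - {Max L}) - {next_in L x}"
    using assms(2,3) by (subst inj_on_image_set_diff[where C = "L - {Max L}"]) auto
  moreover have "L - {Max L, x} = L - {Max L} - {x}" "L - {Min L, next_in L x} = L - {Min L} - {next_in L x}"
    by blast+
  ultimately show ?thesis by (simp only: image_next_in[OF assms(1)])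
qed

lemma image_prev_in_Diff:
  assumes "finite L" "x \<in> L" "Min L < x"
  shows "prev_in L ` (L - {Min L, x}) = L - {Max L, prev_in L x}"
proof -
  have "inj_on (prev_in L) (L - {Min L})"
    by (rule strict_mono_on_imp_inj_on[OF strict_mono_on_prev_in[OF assms(1)]])
  then have "prev_in L ` (L - {Min L} - {x}) = prev_in L ` (L - {Min L}) - {prev_in L x}"
    using assms(2,3) by (subst inj_on_image_set_diff[where C = "L - {Min L}"]) auto
  moreover have "L - {Min L, x} = L - {Min L} - {x}" "L - {Max L, prev_in L x} = L - {Max L} - {prev_in L x}"
    by blast+
  ultimately show ?thesis by (simp only: image_prev_in[OF assms(1)])
qed

fun dmap :: "(nat \<Rightarrow> nat) \<Rightarrow> diamond \<Rightarrow> diamond" where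
  "dmap f (DLeaf l) = DLeaf (f l)"
| "dmap f (DNode a Fs b) = DNode (f a) (map (dmap f) Fs) (f b)"

fun dlabels :: "diamond \<Rightarrow> nat set" where
  "dlabels (DLeaf l) = {l}"
| "dlabels (DNode a Fs b) = {a, b} \<union> \<Union>(dlabels ` set Fs)"

lemma size_dmap [simp]: "size (dmap f d) = size d"
  by (induction d) (auto simp: size_list_conv_sum_list comp_def intro!: arg_cong[where f = sum_list])

lemma dmap_dmap [simp]: "dmap f (dmap g d) = dmap (f \<circ> g) d"
  by (induction d) auto

lemma dmap_ident: "(\<And>x. x \<in> dlabels d \<Longrightarrow> f x = x) \<Longrightarrow> dmap f d = d"
  by (induction d) (auto intro: map_idI)

lemma dweight_dmap [simp]: "dweight phi (dmap f d) = dweight phi d"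
  by (induction d) (simp_all add: comp_def cong: map_cong)

lemma diamond_on_dlabels: "diamond_on L d \<Longrightarrow> dlabels d = L"
proof (induction rule: diamond_on.induct)
  case (node L Ls Fs)
  have "\<Union>(dlabels ` set Fs) = \<Union>(set Ls)"
    using node.IH by (induction rule: list_all2_induct) auto
  moreover have "Min L \<in> L" "Max L \<in> L" using node.hyps(1,2) by (auto intro!: Min_in Max_in)
  ultimately show ?case using node.hyps(4) by auto
qed simp

lemma diamond_on_dmap:
  "diamond_on L d \<Longrightarrow> strict_mono_on L f \<Longrightarrow> diamond_on (f ` L) (dmap f d)"
proof (induction arbitrary: f rule: diamond_on.induct)
  case (leaf l)
  then show ?case by (simp add: diamond_on.leaf)
next
  case (node L Ls Fs)
  have L: "L \<noteq> {}" "Min L \<in> L" "Max L \<in> L" "inj_on f L" "mono_on L f"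
    using node.hyps(1,2) node.prems
    by (auto intro: Min_in Max_in strict_mono_on_imp_inj_on strict_mono_on_imp_mono_on)
  have "list_all2 diamond_on (map ((`) f) Ls) (map (dmap f) Fs)"
    unfolding list_all2_map1 list_all2_map2 using node.IH
  proof (rule list.rel_mono_strong)
    fix X F assume "X \<in> set Ls" "F \<in> set Fs"
      and IH: "diamond_on X F \<and> (\<forall>g. strict_mono_on X g \<longrightarrow> diamond_on (g ` X) (dmap g F))"
    then have "X \<subseteq> L" using node.hyps(4) by blast
    then show "diamond_on (f ` X) (dmap f F)" using IH monotone_on_subset[OF node.prems] by blast
  qed
  moreover have "pw_disj (map ((`) f) Ls)"
    using node.hyps(3,4) L(4) by (intro pw_disj_map_image) (auto intro: inj_on_subset)
  moreover have "\<Union>(set (map ((`) f) Ls)) = f ` L - {Min (f ` L), Max (f ` L)}"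
  proof -
    have "\<Union>(set (map ((`) f) Ls)) = f ` (L - {Min L, Max L})" using node.hyps(4) by auto
    also have "\<dots> = f ` L - f ` {Min L, Max L}"
      by (rule inj_on_image_set_diff[OF L(4)]) (use L in auto)
    finally show ?thesis
      using L node.hyps(1) by (simp add: mono_on_Min_commute mono_on_Max_commute)
  qed
  moreover have "finite (f ` L)" "2 \<le> card (f ` L)"
    using node.hyps(1,2) L(4) by (auto simp: card_image)
  ultimately have "diamond_on (f ` L) (DNode (Min (f ` L)) (map (dmap f) Fs) (Max (f ` L)))"
    by (intro diamond_on.node)
  then show ?case using L node.hyps(1) by (simp add: mono_on_Min_commute mono_on_Max_commute)
qed

lemma list_all2_diamond_on_dmap:
  assumes "list_all2 diamond_on Ls Fs" "strict_mono_on (\<Union>(set Ls)) f"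
  shows "list_all2 diamond_on (map ((`) f) Ls) (map (dmap f) Fs)"
  unfolding list_all2_map1 list_all2_map2 using assms(1)
proof (rule list.rel_mono_strong)
  fix X F assume "X \<in> set Ls" "diamond_on X F"
  then show "diamond_on (f ` X) (dmap f F)"
    using assms(2) by (blast intro: diamond_on_dmap monotone_on_subset)
qed

fun tlabels :: "btree \<Rightarrow> nat set" where
  "tlabels (BNode S Ts) = S \<union> \<Union>(tlabels ` set Ts)"

lemma bt_on_tlabels: "bt_on L t \<Longrightarrow> tlabels t = L"
proof (induction rule: bt_on.induct)
  case (node S Ts Ls L)
  have "\<Union>(tlabels ` set Ts) = \<Union>(set Ls)"
    using node.IH by (induction rule: list_all2_induct) auto
  then show ?case using node.hyps by auto
qed

lemma bt_on_finite: "bt_on L t \<Longrightarrow> finite L"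
proof (induction rule: bt_on.induct)
  case (node S Ts Ls L)
  have "finite S" using node.hyps(1) by (metis card.infinite zero_neq_one zero_neq_numeral)
  moreover have "\<forall>X\<in>set Ls. finite X"
    using node.IH by (induction rule: list_all2_induct) auto
  ultimately show ?case using node.hyps by auto
qed

lemma bt_on_singleton: "bt_on {l} (BNode {l} [])"
  using bt_on.node[of "{l}" "[]" "[]" "{l}"] by (simp add: pw_disj_def)

lemma diamond_on_DNode_shiftE:
  assumes "diamond_on L (DNode a Fs b)"
  obtains Ls where "finite L" "a = Min L" "b = Max L" "a \<in> L" "a < next_in L a" "next_in L a \<in> L"
    "list_all2 diamond_on Ls (map (dmap (next_in L)) Fs)" "pw_disj Ls"
    "\<Union>(set Ls) = L - {a, next_in L a}"
    "\<And>F. F \<in> set Fs \<Longrightarrow> dmap (prev_in L) (dmap (next_in L) F) = F"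
proof -
  from assms obtain Ls where L: "finite L" "2 \<le> card L" "a = Min L" "b = Max L"
    and Fs: "list_all2 diamond_on Ls Fs" "pw_disj Ls" "\<Union>(set Ls) = L - {Min L, Max L}"
    by (cases rule: diamond_on.cases) auto
  have "a \<in> L" "b \<in> L" "a < b" using L Min_less_Max[OF L(1,2)] by (auto intro: Min_in Max_in)
  then have next_a: "next_in L a \<in> L" "a < next_in L a"
    using next_in_least[OF L(1)] by auto
  have children: "\<Union>(set Ls) \<subseteq> L - {Max L}" using Fs(3) by blast
  then have mono: "strict_mono_on (\<Union>(set Ls)) (next_in L)"
    using strict_mono_on_next_in[OF L(1)] by (rule monotone_on_subset[rotated])
  show thesis
  proof (rule that[OF L(1,3,4) \<open>a \<in> L\<close> next_a(2,1) list_all2_diamond_on_dmap[OF Fs(1) mono]])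
    show "pw_disj (map ((`) (next_in L)) Ls)"
      using Fs(2) strict_mono_on_imp_inj_on[OF mono] by (rule pw_disj_map_image[rotated])
    have "\<Union>(set (map ((`) (next_in L)) Ls)) = next_in L ` (L - {Max L, a})"
      using Fs(3) L(3) by (auto simp: insert_commute)
    then show "\<Union>(set (map ((`) (next_in L)) Ls)) = L - {a, next_in L a}"
      using image_next_in_Diff[OF L(1) \<open>a \<in> L\<close>] \<open>a < b\<close> L(3,4) by simp
  next
    fix F assume "F \<in> set Fs"
    then obtain X where "X \<in> set Ls" "diamond_on X F"
      using list_all2_in_set2[OF Fs(1)] by blast
    then have "dlabels F \<subseteq> L - {Max L}" using children diamond_on_dlabels by blast
    then show "dmap (prev_in L) (dmap (next_in L) F) = F"
      unfolding dmap_dmap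
      by (intro dmap_ident) (auto intro!: prev_in_next_in[OF L(1)] simp: less_Max_iff_neq[OF L(1)])
  qed
qed

lemma bt_on_BNode_singletonE:
  assumes "bt_on L (BNode S Ts)" "card S = 1"
  obtains l where "S = {l}" "L = {l}" "Ts = []"
proof -
  from assms obtain Ls where "Ts = []" "list_all2 bt_on Ls Ts" "L = S \<union> \<Union>(set Ls)"
    by (cases rule: bt_on.cases) auto
  then show thesis using that assms(2) by (metis card_1_singletonE Sup_empty Un_empty_right list.rel_sel set_empty2)
qed

lemma bt_on_BNode_pairE:
  assumes "bt_on L (BNode S Ts)" "card S = 2"
  obtains Ls where "finite L" "S = {Min L, next_in L (Min L)}" "Min L < next_in L (Min L)"
    "next_in L (Min L) \<in> L" "list_all2 bt_on Ls Ts" "pw_disj Ls"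
    "\<Union>(set Ls) = L - {Min L, next_in L (Min L)}"
proof -
  from assms(1) obtain Ls where Ts: "list_all2 bt_on Ls Ts" "pw_disj Ls"
    and S: "S \<inter> \<Union>(set Ls) = {}" "\<forall>x\<in>S. \<forall>y\<in>\<Union>(set Ls). x < y" "L = S \<union> \<Union>(set Ls)"
    by (cases rule: bt_on.cases) auto
  obtain a a' where "S = {a, a'}" "a < a'"
    using assms(2) by (metis card_2_iff insert_commute linorder_neq_iff)
  have "finite L" using bt_on_finite[OF assms(1)] .
  have "Min L = a"
    using \<open>finite L\<close> S(2,3) \<open>S = {a, a'}\<close> \<open>a < a'\<close> by (intro Min_eqI) force+
  moreover have "next_in L a = a'"
    using \<open>finite L\<close> S(2,3) \<open>S = {a, a'}\<close> \<open>a < a'\<close> by (intro next_in_eqI) force+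
  ultimately show thesis
  proof (intro that[OF \<open>finite L\<close> _ _ _ Ts])
    show "\<Union>(set Ls) = L - {Min L, next_in L (Min L)}"
      using S(1,3) \<open>S = {a, a'}\<close> \<open>Min L = a\<close> \<open>next_in L a = a'\<close> by blast
  qed (use S(3) \<open>S = {a, a'}\<close> \<open>a < a'\<close> in auto)
qed

function tree_of_diamond :: "diamond \<Rightarrow> btree" where
  "tree_of_diamond (DLeaf l) = BNode {l} []"
| "tree_of_diamond (DNode a Fs b) = BNode {a, next_in (dlabels (DNode a Fs b)) a}
     (map (\<lambda>F. tree_of_diamond (dmap (next_in (dlabels (DNode a Fs b))) F)) Fs)"
  by pat_completeness auto
termination
  by (relation "measure size") (auto simp: less_Suc_eq_le intro: size_list_estimation')

fun diamond_of_tree :: "btree \<Rightarrow> diamond" where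
  "diamond_of_tree (BNode S Ts) = (if card S = 1 then DLeaf (Min S) else
     DNode (Min S) (map (\<lambda>T. dmap (prev_in (tlabels (BNode S Ts))) (diamond_of_tree T)) Ts)
       (Max (tlabels (BNode S Ts))))"

lemma bt_on_tree_of_diamond: "diamond_on L d \<Longrightarrow> bt_on L (tree_of_diamond d)"
proof (induction d arbitrary: L rule: tree_of_diamond.induct)
  case (1 l)
  then show ?case by (cases rule: diamond_on.cases) (auto simp: bt_on_singleton)
next
  case (2 a Fs b)
  obtain Ls where L: "finite L" "a = Min L" "a < next_in L a" "a \<in> L" "next_in L a \<in> L"
    and Fs: "list_all2 diamond_on Ls (map (dmap (next_in L)) Fs)" "pw_disj Ls"
      "\<Union>(set Ls) = L - {a, next_in L a}"
    using diamond_on_DNode_shiftE[OF "2.prems"] by metis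
  have IH: "\<And>F X. F \<in> set Fs \<Longrightarrow> diamond_on X (dmap (next_in L) F) \<Longrightarrow> bt_on X (tree_of_diamond (dmap (next_in L) F))"
    using "2.IH" diamond_on_dlabels[OF "2.prems"] by blast
  have "bt_on L (BNode {a, next_in L a} (map (\<lambda>F. tree_of_diamond (dmap (next_in L) F)) Fs))"
  proof (rule bt_on.node[of _ _ Ls])
    show "list_all2 bt_on Ls (map (\<lambda>F. tree_of_diamond (dmap (next_in L) F)) Fs)"
      using Fs(1) unfolding list_all2_map2 by (rule list.rel_mono_strong) (use IH in auto)
    show "\<forall>x\<in>{a, next_in L a}. \<forall>y\<in>\<Union>(set Ls). x < y"
    proof (intro ballI)
      fix x y assume "x \<in> {a, next_in L a}" "y \<in> \<Union>(set Ls)"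
      then have "y \<in> L" "a < y" "y \<noteq> next_in L a" "x \<le> next_in L a"
        using Fs(3) L(1,2,3) by (auto simp: Min_less_iff_neq)
      then show "x < y" using next_in_least(3)[OF L(1)] by fastforce
    qed
  qed (use Fs L in auto)
  then show ?case using diamond_on_dlabels[OF "2.prems"] by simp
qed

lemma btweight_tree_of_diamond: "diamond_on L d \<Longrightarrow> btweight phi (tree_of_diamond d) = dweight phi d"
proof (induction d arbitrary: L rule: tree_of_diamond.induct)
  case (1 l)
  then show ?case by simp
next
  case (2 a Fs b)
  obtain Ls where L: "a < next_in L a"
    and Fs: "list_all2 diamond_on Ls (map (dmap (next_in L)) Fs)"
    using diamond_on_DNode_shiftE[OF "2.prems"] by metis
  have "btweight phi (tree_of_diamond (dmap (next_in L) F)) = dweight phi F" if "F \<in> set Fs" for F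
  proof -
    obtain X where "diamond_on X (dmap (next_in L) F)"
      using list_all2_in_set2[OF Fs] \<open>F \<in> set Fs\<close> by auto
    then show ?thesis using "2.IH" \<open>F \<in> set Fs\<close> diamond_on_dlabels[OF "2.prems"] by simp
  qed
  then show ?case using L diamond_on_dlabels[OF "2.prems"] by (simp cong: map_cong)
qed

lemma diamond_of_tree_of_diamond: "diamond_on L d \<Longrightarrow> diamond_of_tree (tree_of_diamond d) = d"
proof (induction d arbitrary: L rule: tree_of_diamond.induct)
  case (1 l)
  then show ?case by simp
next
  case (2 a Fs b)
  obtain Ls where L: "a < next_in L a" "b = Max L"
    and Fs: "list_all2 diamond_on Ls (map (dmap (next_in L)) Fs)"
      "\<And>F. F \<in> set Fs \<Longrightarrow> dmap (prev_in L) (dmap (next_in L) F) = F"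
    using diamond_on_DNode_shiftE[OF "2.prems"] by metis
  have "dmap (prev_in L) (diamond_of_tree (tree_of_diamond (dmap (next_in L) F))) = F" if "F \<in> set Fs" for F
  proof -
    obtain X where "diamond_on X (dmap (next_in L) F)"
      using list_all2_in_set2[OF Fs(1)] \<open>F \<in> set Fs\<close> by auto
    then show ?thesis
      using "2.IH" Fs(2) \<open>F \<in> set Fs\<close> diamond_on_dlabels[OF "2.prems"] by simp
  qed
  moreover have "tlabels (tree_of_diamond (DNode a Fs b)) = L"
    using bt_on_tlabels[OF bt_on_tree_of_diamond[OF "2.prems"]] .
  ultimately show ?case
    using L diamond_on_dlabels[OF "2.prems"] by (auto simp: card_2_iff intro: map_idI)
qed

lemma diamond_of_tree_BNode_pair:
  assumes "bt_on L (BNode S Ts)" "card S = 2"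
  shows "diamond_of_tree (BNode S Ts) = DNode (Min L) (map (\<lambda>T. dmap (prev_in L) (diamond_of_tree T)) Ts) (Max L)"
proof -
  obtain Ls where "S = {Min L, next_in L (Min L)}" "Min L < next_in L (Min L)"
    using bt_on_BNode_pairE[OF assms] by metis
  then show ?thesis using assms(2) bt_on_tlabels[OF assms(1)] by simp
qed

lemma diamond_on_diamond_of_tree: "bt_on L t \<Longrightarrow> diamond_on L (diamond_of_tree t)"
proof (induction t arbitrary: L)
  case (BNode S Ts)
  have "card S = 1 \<or> card S = 2" using BNode.prems by (cases rule: bt_on.cases) auto
  then show ?case
  proof
    assume "card S = 1"
    with BNode.prems show ?case by (elim bt_on_BNode_singletonE) (auto intro: diamond_on.leaf)
  next
    assume "card S = 2"
    obtain Ls where L: "finite L" "Min L < next_in L (Min L)" "next_in L (Min L) \<in> L"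
      and Ts: "list_all2 bt_on Ls Ts" "pw_disj Ls" "\<Union>(set Ls) = L - {Min L, next_in L (Min L)}"
      using bt_on_BNode_pairE[OF BNode.prems \<open>card S = 2\<close>] by metis
    have "list_all2 diamond_on Ls (map diamond_of_tree Ts)"
      using Ts(1) unfolding list_all2_map2 by (rule list.rel_mono_strong) (use BNode.IH in auto)
    moreover have mono: "strict_mono_on (\<Union>(set Ls)) (prev_in L)"
      using strict_mono_on_prev_in[OF L(1)] by (rule monotone_on_subset) (use Ts(3) in auto)
    ultimately have "list_all2 diamond_on (map ((`) (prev_in L)) Ls) (map (dmap (prev_in L)) (map diamond_of_tree Ts))"
      by (rule list_all2_diamond_on_dmap)
    moreover have "pw_disj (map ((`) (prev_in L)) Ls)"
      using strict_mono_on_imp_inj_on[OF mono] Ts(2) by (rule pw_disj_map_image)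
    moreover have "\<Union>(set (map ((`) (prev_in L)) Ls)) = L - {Min L, Max L}"
    proof -
      have "Min L \<in> L" using L(1,3) by (auto intro: Min_in)
      moreover have "Min L < Max L" using less_le_trans[OF L(2) Max_ge[OF L(1,3)]] .
      ultimately have "prev_in L (next_in L (Min L)) = Min L" by (rule prev_in_next_in[OF L(1)])
      moreover have "\<Union>(set (map ((`) (prev_in L)) Ls)) = prev_in L ` (L - {Min L, next_in L (Min L)})"
        using Ts(3) by auto
      ultimately show ?thesis
        using image_prev_in_Diff[OF L(1,3,2)] by (simp add: insert_commute)
    qed
    moreover have "2 \<le> card L"
    proof -
      have "{Min L, next_in L (Min L)} \<subseteq> L" using L(1,3) by (auto intro: Min_in)
      then show ?thesis using L(1,2) card_mono[of L "{Min L, next_in L (Min L)}"] by simp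
    qed
    ultimately have "diamond_on L (DNode (Min L) (map (dmap (prev_in L)) (map diamond_of_tree Ts)) (Max L))"
      using L(1) by (intro diamond_on.node)
    then show ?case unfolding diamond_of_tree_BNode_pair[OF BNode.prems \<open>card S = 2\<close>] map_map comp_def .
  qed
qed

lemma tree_of_diamond_of_tree: "bt_on L t \<Longrightarrow> tree_of_diamond (diamond_of_tree t) = t"
proof (induction t arbitrary: L)
  case (BNode S Ts)
  have "card S = 1 \<or> card S = 2" using BNode.prems by (cases rule: bt_on.cases) auto
  then show ?case
  proof
    assume "card S = 1"
    with BNode.prems show ?case by (elim bt_on_BNode_singletonE) auto
  next
    assume "card S = 2"
    obtain Ls where L: "finite L" "S = {Min L, next_in L (Min L)}"
      and Ts: "list_all2 bt_on Ls Ts" "\<Union>(set Ls) = L - {Min L, next_in L (Min L)}"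
      using bt_on_BNode_pairE[OF BNode.prems \<open>card S = 2\<close>] by metis
    have "tree_of_diamond (dmap (next_in L) (dmap (prev_in L) (diamond_of_tree T))) = T" if "T \<in> set Ts" for T
    proof -
      obtain X where X: "X \<in> set Ls" "bt_on X T"
        using list_all2_in_set2[OF Ts(1) \<open>T \<in> set Ts\<close>] by blast
      have "dlabels (diamond_of_tree T) \<subseteq> L - {Min L}"
        using diamond_on_dlabels[OF diamond_on_diamond_of_tree[OF X(2)]] X(1) Ts(2) by blast
      then have "dmap (next_in L) (dmap (prev_in L) (diamond_of_tree T)) = diamond_of_tree T"
        unfolding dmap_dmap
        by (intro dmap_ident) (auto intro!: next_in_prev_in[OF L(1)] simp: Min_less_iff_neq[OF L(1)])
      then show ?thesis using BNode.IH[OF \<open>T \<in> set Ts\<close> X(2)] by simp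
    qed
    moreover have "dlabels (diamond_of_tree (BNode S Ts)) = L"
      using diamond_on_dlabels[OF diamond_on_diamond_of_tree[OF BNode.prems]] .
    ultimately show ?case
      using diamond_of_tree_BNode_pair[OF BNode.prems \<open>card S = 2\<close>] L(2) by (auto intro: map_idI)
  qed
qed

theorem mainTheorem2:
  fixes phi :: "nat \<Rightarrow> real" and n :: nat
  assumes "\<And>k. phi k \<ge> 0" and "phi 0 > 0" and "n \<ge> 1"
  shows "\<exists>f. bij_betw f {d. diamond_on {1..n} d} {t. bt_on {1..n} t}
            \<and> (\<forall>d. diamond_on {1..n} d \<longrightarrow> btweight phi (f d) = dweight phi d)
            \<and> (\<Sum>d\<in>{d. diamond_on {1..n} d}. dweight phi d)
                = (\<Sum>t\<in>{t. bt_on {1..n} t}. btweight phi t)"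
proof (intro exI conjI)
  show bij: "bij_betw tree_of_diamond {d. diamond_on {1..n} d} {t. bt_on {1..n} t}"
    by (rule bij_betw_byWitness[where f' = diamond_of_tree])
       (auto simp: diamond_of_tree_of_diamond tree_of_diamond_of_tree bt_on_tree_of_diamond diamond_on_diamond_of_tree)
  show weight: "\<forall>d. diamond_on {1..n} d \<longrightarrow> btweight phi (tree_of_diamond d) = dweight phi d"
    by (auto simp: btweight_tree_of_diamond)
  have "(\<Sum>t\<in>{t. bt_on {1..n} t}. btweight phi t) = (\<Sum>d\<in>{d. diamond_on {1..n} d}. btweight phi (tree_of_diamond d))"
    by (rule sum.reindex_bij_betw[OF bij, symmetric])
  also have "\<dots> = (\<Sum>d\<in>{d. diamond_on {1..n} d}. dweight phi d)"
    using weight by (intro sum.cong) auto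
  finally show "(\<Sum>d\<in>{d. diamond_on {1..n} d}. dweight phi d) = (\<Sum>t\<in>{t. bt_on {1..n} t}. btweight phi t)" ..
qed

end
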